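(* For every integer $m\ge0$ and every $z\in\mathfrak U$, the $2m$-th derivative satisfies $T^{(2m)}(z)\neq0$.
   Context: Let $V_0<V_1<\dots<V_n$ be real, $\beta_1,\dots,\beta_n\in[-1,1]$, $\beta_0:=-1$, $\beta_{n+1}:=1$, with $\beta_i\ne\beta_{i+1}$ for all $0\le i\le n$. Define $$T(z)=\sum_{i=0}^n\tfrac12(\beta_{i+1}-\beta_i)\frac1{z-e^{V_i}}$$ and $$\mathfrak U=(-\infty,e^{V_0})\cup(e^{V_n},\infty)\cup\bigcup_{1\le i\le n,\ \beta_i=\pm1}(e^{V_{i-1}},e^{V_i}).$$ *)

theory Defs
  imports "HOL-Analysis.Analysis"
begin

text \<open>The rational function T, with the convention that beta 0 = -1 and
  beta (n+1) = 1 are imposed as hypotheses in the theorem.\<close>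
definition T_fun :: "nat \<Rightarrow> (nat \<Rightarrow> real) \<Rightarrow> (nat \<Rightarrow> real) \<Rightarrow> real \<Rightarrow> real" where
  "T_fun n V \<beta> z = (\<Sum>i=0..n. (1/2) * (\<beta> (Suc i) - \<beta> i) * (1 / (z - exp (V i))))"

definition U_set :: "nat \<Rightarrow> (nat \<Rightarrow> real) \<Rightarrow> (nat \<Rightarrow> real) \<Rightarrow> real set" where
  "U_set n V \<beta> = {..<exp (V 0)} \<union> {exp (V n)<..} \<union>
     (\<Union>i\<in>{i. 1 \<le> i \<and> i \<le> n \<and> (\<beta> i = 1 \<or> \<beta> i = -1)}. {exp (V (i - 1))<..<exp (V i)})"

end

theory Submission
  imports Defs
begin

text \<open>Differentiating term by term, the 2m-th derivative of T at z is a positive multiple of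
  the sum of (\<beta>(i+1) - \<beta> i) f i with f i = 1 / (z - exp (V i))^(2m+1). Since the exponent
  is odd, f is positive on the poles left of z, negative on those right of z, and increasing on
  each of these two blocks. Summation by parts with |\<beta> i| \<le> 1 bounds the sum over each block
  by its boundary terms. As z lies in a gap (exp (V (k-1)), exp (V k)) with \<beta> k = 1 or -1
  (the two outer rays being the cases k = 0 and k = n+1, where \<beta> 0 = -1 and \<beta> (n+1) = 1),
  both block sums then have the same sign and one of them is nonzero.\<close>

lemma has_field_derivative_inverse_power:
  fixes a w :: "'a::real_normed_field"
  assumes "w \<noteq> a"
  shows "((\<lambda>w. inverse ((w - a) ^ Suc k)) has_field_derivative
           - of_nat (Suc k) * inverse ((w - a) ^ Suc (Suc k))) (at w)"
proof -
  have "((\<lambda>w. (w - a) powi - int (Suc k)) has_field_derivative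
          of_int (- int (Suc k)) * (w - a) powi (- int (Suc k) - 1) * 1) (at w)"
    using assms by (intro DERIV_power_int derivative_eq_intros) auto
  moreover have "- int (Suc k) - 1 = - int (Suc (Suc k))" by simp
  ultimately show ?thesis
    by (simp only: power_int_minus power_int_of_nat) simp
qed

lemma higher_deriv_sum_simple_poles:
  fixes c a :: "'i \<Rightarrow> 'a::real_normed_field"
  assumes "finite I" "w \<notin> a ` I"
  shows "(deriv ^^ k) (\<lambda>w. \<Sum>i\<in>I. c i / (w - a i)) w
           = (\<Sum>i\<in>I. c i * (- 1) ^ k * fact k * inverse ((w - a i) ^ Suc k))"
  using assms(2)
proof (induction k arbitrary: w)
  case 0
  then show ?case by (simp add: divide_inverse)
next
  case (Suc k)
  have "((\<lambda>w. \<Sum>i\<in>I. c i * (- 1) ^ k * fact k * inverse ((w - a i) ^ Suc k))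
      has_field_derivative (\<Sum>i\<in>I. c i * (- 1) ^ Suc k * fact (Suc k) * inverse ((w - a i) ^ Suc (Suc k)))) (at w)"
  proof (intro DERIV_sum derivative_eq_intros(1))
    fix i assume "i \<in> I"
    then have "w \<noteq> a i" using Suc.prems by auto
    from has_field_derivative_inverse_power[OF this, of k]
    show "((\<lambda>w. c i * (- 1) ^ k * fact k * inverse ((w - a i) ^ Suc k)) has_field_derivative
        c i * (- 1) ^ Suc k * fact (Suc k) * inverse ((w - a i) ^ Suc (Suc k))) (at w)"
      by (auto dest: DERIV_cmult[where c = "c i * (- 1) ^ k * fact k"] simp: algebra_simps)
  qed
  moreover have "open (- a ` I)"
    using assms(1) by (intro open_Compl finite_imp_closed) auto
  ultimately have "((deriv ^^ k) (\<lambda>w. \<Sum>i\<in>I. c i / (w - a i)) has_field_derivative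
      (\<Sum>i\<in>I. c i * (- 1) ^ Suc k * fact (Suc k) * inverse ((w - a i) ^ Suc (Suc k)))) (at w)"
    by (rule has_field_derivative_transform_within_open) (use Suc in auto)
  then show ?case by (simp add: DERIV_imp_deriv)
qed

text \<open>Abel summation: the sum is the boundary term \<beta>(q+1) f q - \<beta> p f p minus the sum of
  \<beta> j (f j - f (j-1)), and |\<beta> j| \<le> 1 bounds the latter by the telescoping sum f q - f p.\<close>

lemma sum_diff_mult_incseq_lower:
  fixes \<beta> f :: "nat \<Rightarrow> real"
  assumes "p \<le> q"
    and "\<And>j. p \<le> j \<Longrightarrow> j < q \<Longrightarrow> f j \<le> f (Suc j)"
    and "\<And>j. p < j \<Longrightarrow> j \<le> q \<Longrightarrow> \<bar>\<beta> j\<bar> \<le> 1"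
  shows "(\<beta> (Suc q) - 1) * f q + (1 - \<beta> p) * f p \<le> (\<Sum>i=p..q. (\<beta> (Suc i) - \<beta> i) * f i)"
  using assms
proof (induction q rule: dec_induct)
  case base
  then show ?case by (simp add: algebra_simps)
next
  case (step q)
  have "0 \<le> (1 - \<beta> (Suc q)) * (f (Suc q) - f q)"
    using step by (simp add: abs_le_iff)
  with step show ?case
    by (simp add: sum.cl_ivl_Suc algebra_simps)
qed

lemma sum_diff_mult_incseq_upper:
  fixes \<beta> f :: "nat \<Rightarrow> real"
  assumes "p \<le> q"
    and "\<And>j. p \<le> j \<Longrightarrow> j < q \<Longrightarrow> f j \<le> f (Suc j)"
    and "\<And>j. p < j \<Longrightarrow> j \<le> q \<Longrightarrow> \<bar>\<beta> j\<bar> \<le> 1"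
  shows "(\<Sum>i=p..q. (\<beta> (Suc i) - \<beta> i) * f i) \<le> (\<beta> (Suc q) + 1) * f q - (\<beta> p + 1) * f p"
proof -
  have "(- \<beta> (Suc q) - 1) * f q + (1 - - \<beta> p) * f p
      \<le> (\<Sum>i=p..q. (- \<beta> (Suc i) - - \<beta> i) * f i)"
    by (rule sum_diff_mult_incseq_lower) (use assms in auto)
  also have "\<dots> = - (\<Sum>i=p..q. (\<beta> (Suc i) - \<beta> i) * f i)"
    by (simp add: sum_negf[symmetric] algebra_simps)
  finally show ?thesis by (simp add: algebra_simps)
qed

lemma sum_diff_mult_sign_change_nonzero:
  fixes \<beta> f :: "nat \<Rightarrow> real"
  assumes "k \<le> Suc n"
    and \<beta>0: "\<beta> 0 = -1" and \<beta>n1: "\<beta> (Suc n) = 1" and \<beta>k: "\<bar>\<beta> k\<bar> = 1"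
    and bounded: "\<And>j. 0 < j \<Longrightarrow> j \<le> n \<Longrightarrow> \<bar>\<beta> j\<bar> \<le> 1"
    and pos: "\<And>i. i < k \<Longrightarrow> 0 < f i"
    and neg: "\<And>i. k \<le> i \<Longrightarrow> i \<le> n \<Longrightarrow> f i < 0"
    and mono_below: "\<And>j. Suc j < k \<Longrightarrow> f j \<le> f (Suc j)"
    and mono_above: "\<And>j. k \<le> j \<Longrightarrow> j < n \<Longrightarrow> f j \<le> f (Suc j)"
  shows "(\<Sum>i=0..n. (\<beta> (Suc i) - \<beta> i) * f i) \<noteq> 0"
proof -
  let ?S = "\<lambda>A. \<Sum>i\<in>A. (\<beta> (Suc i) - \<beta> i) * f i"
  have "{0..n} = {..<k} \<union> {k..n}"
    using \<open>k \<le> Suc n\<close> by auto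
  then have split: "?S {0..n} = ?S {..<k} + ?S {k..n}"
    by (simp add: sum.union_disjoint ivl_disj_int)
  from \<beta>k consider "\<beta> k = 1" | "\<beta> k = -1"
    by linarith
  then show ?thesis
  proof cases
    case 1
    then obtain k' where k: "k = Suc k'"
      using \<beta>0 by (cases k) auto
    have "(\<beta> (Suc k') - 1) * f k' + (1 - \<beta> 0) * f 0 \<le> ?S {0..k'}"
      by (rule sum_diff_mult_incseq_lower) (use k mono_below bounded \<open>k \<le> Suc n\<close> in auto)
    then have below: "0 < ?S {..<k}"
      using 1 \<beta>0 pos[of 0] k by (simp add: lessThan_Suc_atMost atLeast0AtMost)
    have above: "0 \<le> ?S {k..n}"
    proof (cases "k \<le> n")
      case True
      have "(\<beta> (Suc n) - 1) * f n + (1 - \<beta> k) * f k \<le> ?S {k..n}"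
        by (rule sum_diff_mult_incseq_lower) (use True mono_above bounded k in auto)
      then show ?thesis using 1 \<beta>n1 by simp
    qed simp
    show ?thesis using split below above by linarith
  next
    case 2
    then have "k \<le> n"
      using \<beta>n1 \<open>k \<le> Suc n\<close> by (cases "k = Suc n") auto
    have "?S {k..n} \<le> (\<beta> (Suc n) + 1) * f n - (\<beta> k + 1) * f k"
      by (rule sum_diff_mult_incseq_upper) (use \<open>k \<le> n\<close> mono_above bounded in auto)
    then have above: "?S {k..n} < 0"
      using 2 \<beta>n1 neg[of n] \<open>k \<le> n\<close> by simp
    have below: "?S {..<k} \<le> 0"
    proof (cases k)
      case (Suc k')
      have "?S {0..k'} \<le> (\<beta> (Suc k') + 1) * f k' - (\<beta> 0 + 1) * f 0"
        by (rule sum_diff_mult_incseq_upper) (use Suc mono_below bounded \<open>k \<le> n\<close> in auto)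
      then show ?thesis
        using 2 \<beta>0 Suc by (simp add: lessThan_Suc_atMost atLeast0AtMost)
    qed simp
    show ?thesis using split below above by linarith
  qed
qed

lemma inverse_odd_power_diff_mono:
  fixes a b z :: real
  assumes "odd N" "a \<le> b" "z < a \<or> b < z"
  shows "inverse ((z - a) ^ N) \<le> inverse ((z - b) ^ N)"
proof -
  have le: "(z - b) ^ N \<le> (z - a) ^ N"
    using assms(1,2) by (intro power_mono_odd) auto
  from assms(3) show ?thesis
  proof
    assume "z < a"
    then have "(z - a) ^ N < 0" using assms(1) by simp
    with le show ?thesis by (rule le_imp_inverse_le_neg)
  next
    assume "b < z"
    then have "0 < (z - b) ^ N" by simp
    with le show ?thesis by (rule le_imp_inverse_le)
  qed
qed

lemma U_set_cut:
  assumes V_mono: "\<And>i. i < n \<Longrightarrow> V i < V (Suc i)"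
    and \<beta>0: "\<beta> 0 = -1" and \<beta>n1: "\<beta> (Suc n) = 1" and z: "z \<in> U_set n V \<beta>"
  obtains k where "k \<le> Suc n" "\<bar>\<beta> k\<bar> = 1"
    "\<And>i. i < k \<Longrightarrow> exp (V i) < z" "\<And>i. k \<le> i \<Longrightarrow> i \<le> n \<Longrightarrow> z < exp (V i)"
proof -
  have mono: "exp (V i) \<le> exp (V j)" if "i \<le> j" "j \<le> n" for i j
    using lift_Suc_mono_le_ivl[of "{..<n}" V i j] V_mono that by fastforce
  from z consider "z < exp (V 0)" | "exp (V n) < z"
    | k where "1 \<le> k" "k \<le> n" "\<beta> k = 1 \<or> \<beta> k = -1" "exp (V (k - 1)) < z" "z < exp (V k)"
    unfolding U_set_def by auto
  then show ?thesis
  proof cases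
    case 1
    show ?thesis
    proof (rule that[of 0])
      show "z < exp (V i)" if "0 \<le> i" "i \<le> n" for i
        using 1 mono[of 0 i] that by linarith
    qed (use \<beta>0 in auto)
  next
    case 2
    show ?thesis
    proof (rule that[of "Suc n"])
      show "exp (V i) < z" if "i < Suc n" for i
        using 2 mono[of i n] that by linarith
    qed (use \<beta>n1 in auto)
  next
    case (3 k)
    show ?thesis
    proof (rule that[of k])
      show "exp (V i) < z" if "i < k" for i
        using 3 mono[of i "k - 1"] that by linarith
      show "z < exp (V i)" if "k \<le> i" "i \<le> n" for i
        using 3 mono[of k i] that by linarith
    qed (use 3 in auto)
  qed
qed

lemma T_fun_higher_deriv:
  assumes "z \<notin> (\<lambda>i. exp (V i)) ` {0..n}"
  shows "(deriv ^^ k) (T_fun n V \<beta>) z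
           = (- 1) ^ k * fact k / 2 * (\<Sum>i=0..n. (\<beta> (Suc i) - \<beta> i) * inverse ((z - exp (V i)) ^ Suc k))"
proof -
  have T_eq: "T_fun n V \<beta> = (\<lambda>w. \<Sum>i\<in>{0..n}. (\<beta> (Suc i) - \<beta> i) / 2 / (w - exp (V i)))"
    unfolding T_fun_def by auto
  have "(deriv ^^ k) (T_fun n V \<beta>) z
      = (\<Sum>i\<in>{0..n}. (\<beta> (Suc i) - \<beta> i) / 2 * (- 1) ^ k * fact k * inverse ((z - exp (V i)) ^ Suc k))"
    unfolding T_eq by (rule higher_deriv_sum_simple_poles) (use assms in auto)
  then show ?thesis
    by (simp add: sum_distrib_left mult_ac del: power_Suc)
qed

lemma sum_diff_mult_inverse_odd_power_nonzero:
  fixes V \<beta> :: "nat \<Rightarrow> real"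
  assumes V_mono: "\<And>i. i < n \<Longrightarrow> V i < V (Suc i)"
    and bounded: "\<And>j. 0 < j \<Longrightarrow> j \<le> n \<Longrightarrow> \<bar>\<beta> j\<bar> \<le> 1"
    and \<beta>0: "\<beta> 0 = -1" and \<beta>n1: "\<beta> (Suc n) = 1"
    and k: "k \<le> Suc n" "\<bar>\<beta> k\<bar> = 1"
    and below: "\<And>i. i < k \<Longrightarrow> exp (V i) < z"
    and above: "\<And>i. k \<le> i \<Longrightarrow> i \<le> n \<Longrightarrow> z < exp (V i)"
    and "odd N"
  shows "(\<Sum>i=0..n. (\<beta> (Suc i) - \<beta> i) * inverse ((z - exp (V i)) ^ N)) \<noteq> 0"
proof (rule sum_diff_mult_sign_change_nonzero[OF k(1) \<beta>0 \<beta>n1 k(2) bounded])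
  show "0 < inverse ((z - exp (V i)) ^ N)" if "i < k" for i
    using below[OF that] by simp
  show "inverse ((z - exp (V i)) ^ N) < 0" if "k \<le> i" "i \<le> n" for i
    using above[OF that] \<open>odd N\<close> by simp
  show "inverse ((z - exp (V j)) ^ N) \<le> inverse ((z - exp (V (Suc j))) ^ N)" if "Suc j < k" for j
    using V_mono[of j] below[OF that] that k(1) \<open>odd N\<close>
    by (intro inverse_odd_power_diff_mono) auto
  show "inverse ((z - exp (V j)) ^ N) \<le> inverse ((z - exp (V (Suc j))) ^ N)" if "k \<le> j" "j < n" for j
    using V_mono[of j] above[of j] that \<open>odd N\<close>
    by (intro inverse_odd_power_diff_mono) auto
qed

theorem lemma4p2:
  fixes n :: nat and V \<beta> :: "nat \<Rightarrow> real" and m :: nat and z :: real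
  assumes V_mono: "\<And>i. i < n \<Longrightarrow> V i < V (Suc i)"
    and \<beta>_range: "\<And>i. 1 \<le> i \<Longrightarrow> i \<le> n \<Longrightarrow> \<beta> i \<in> {-1..1}"
    and \<beta>0: "\<beta> 0 = -1"
    and \<beta>n1: "\<beta> (Suc n) = 1"
    and \<beta>_ne: "\<And>i. i \<le> n \<Longrightarrow> \<beta> i \<noteq> \<beta> (Suc i)"
    and z: "z \<in> U_set n V \<beta>"
  shows "(deriv ^^ (2 * m)) (T_fun n V \<beta>) z \<noteq> 0"
proof -
  obtain k where k: "k \<le> Suc n" "\<bar>\<beta> k\<bar> = 1"
    and below: "\<And>i. i < k \<Longrightarrow> exp (V i) < z"
    and above: "\<And>i. k \<le> i \<Longrightarrow> i \<le> n \<Longrightarrow> z < exp (V i)"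
    using U_set_cut[OF V_mono \<beta>0 \<beta>n1 z] by blast
  have "z \<notin> (\<lambda>i. exp (V i)) ` {0..n}"
  proof
    assume "z \<in> (\<lambda>i. exp (V i)) ` {0..n}"
    then obtain i where "i \<le> n" "z = exp (V i)" by auto
    then show False
      using below[of i] above[of i] by (cases "i < k") auto
  qed
  then have deriv_eq: "(deriv ^^ (2 * m)) (T_fun n V \<beta>) z
      = fact (2 * m) / 2 * (\<Sum>i=0..n. (\<beta> (Suc i) - \<beta> i) * inverse ((z - exp (V i)) ^ Suc (2 * m)))"
    by (simp add: T_fun_higher_deriv del: power_Suc)
  have bounded: "\<bar>\<beta> j\<bar> \<le> 1" if "0 < j" "j \<le> n" for j
    using \<beta>_range[of j] that by auto
  have "(\<Sum>i=0..n. (\<beta> (Suc i) - \<beta> i) * inverse ((z - exp (V i)) ^ Suc (2 * m))) \<noteq> 0"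
    using V_mono bounded \<beta>0 \<beta>n1 k below above
    by (rule sum_diff_mult_inverse_odd_power_nonzero[where V = V and \<beta> = \<beta> and z = z]) simp_all
  then show ?thesis
    unfolding deriv_eq by simp
qed

end
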